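(* Consider an instance of the MSSN-MC-HC problem with $m=|Q|$ sources and costs $c_s>0$, $c_r>0$, for which there exists a feasible solution using exactly one sink. Suppose there exists $\alpha\in(0,1]$ such that $\frac{c_s}{c_r}\ge\lceil\alpha m\rceil(\lceil\alpha m\rceil+1)(h_{\max}-1)$. Then the approximation ratio of SmartSelect on such instances (cost of its output divided by the optimum cost) is at most $1+\frac{1}{\alpha}$.
   Context: MSSN-MC-HC problem: given a finite undirected graph $G=(V,E)$ with $V=Q\cup R\cup B$ (pairwise disjoint; $Q$ = sources, $R$ = potential relay locations, $B$ = potential sink locations), costs $c_s$ per sink and $c_r$ per relay, and a positive integer $h_{\max}$, select $B'\subseteq B$, $R'\subseteq R$ such that in the subgraph induced by $Q\cup R'\cup B'$ every source has a path of at most $h_{\max}$ edges to some sink of $B'$ (a feasible solution), minimizing $c_s|B'|+c_r|R'|$. A feasible solution "using exactly one sink" has $|B'|=1$. SmartSelect algorithm: (1) If for some $b\in B$ every source has a path of at most $h_{\max}$ edges to $b$ in the subgraph induced by $Q\cup B$, output $(\{b\},\emptyset)$. (2) If some source has no path of at most $h_{\max}$ edges in $G$ to any sink, declare infeasible. (3) For each $b_i\in B$ let $Q_i$ be the set of sources whose shortest path to $b_i$ in $G$ has at most $h_{\max}$ edges, and $R_i$ the set of relays whose shortest path to $b_i$ has at most $h_{\max}-1$ edges. (4) Greedy phase, iterations $j=0,1,\dots$: $B^{(0)}=B$, $Q_i^{(0)}=Q_i$; $B^{(j)}$ is the set of sinks not yet picked and $Q_i^{(j)}$ the set of sources of $Q_i$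 not yet covered. In iteration $j$, for each $b_i\in B^{(j)}$, a relay-selection subroutine (e.g. the SPTiRP algorithm) applied to the subgraph of $G$ induced by $Q_i^{(j)}\cup R_i\cup\{b_i\}$ returns a set $\hat R_i^{(j)}\subseteq R_i$ consisting of the relays on one chosen path of at most $h_{\max}$ edges from each source of $Q_i^{(j)}$ to $b_i$. Let $n_i^{(j)}$ be the number of relays in $\hat R_i^{(j)}$ not selected in earlier iterations (earlier-selected relays have cost zero thereafter), and $C_i^{(j)}=\frac{c_s+c_r n_i^{(j)}}{|Q_i^{(j)}|}$. The sink $b_i$ with least $C_i^{(j)}$ is picked (ties broken in favor of larger $|Q_i^{(j)}|$), its sources $Q_i^{(j)}$ become covered and the relays $\hat R_i^{(j)}$ are selected. Stop when all sources are covered; output the picked sinks and selected relays. *)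

theory Defs
  imports Main "HOL-Library.Multiset" Complex_Main
begin

text \<open>Undirected graph: symmetric adjacency relation E on vertices of type 'v.
  A path of at most h edges from u to v inside vertex set S
  (i.e. in the subgraph induced by S).\<close>

definition hpath :: "('v \<Rightarrow> 'v \<Rightarrow> bool) \<Rightarrow> 'v set \<Rightarrow> 'v \<Rightarrow> 'v \<Rightarrow> nat \<Rightarrow> 'v list \<Rightarrow> bool" where
  "hpath E S u v h p \<longleftrightarrow>
     p \<noteq> [] \<and> hd p = u \<and> last p = v \<and> set p \<subseteq> S \<and> distinct p \<and>
     (\<forall>i. Suc i < length p \<longrightarrow> E (p ! i) (p ! Suc i)) \<and>
     length p \<le> Suc h"

definition reach :: "('v \<Rightarrow> 'v \<Rightarrow> bool) \<Rightarrow> 'v set \<Rightarrow> 'v \<Rightarrow> 'v \<Rightarrow> nat \<Rightarrow> bool" where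
  "reach E S u v h \<longleftrightarrow> (\<exists>p. hpath E S u v h p)"

definition feasible ::
  "('v \<Rightarrow> 'v \<Rightarrow> bool) \<Rightarrow> 'v set \<Rightarrow> 'v set \<Rightarrow> 'v set \<Rightarrow> nat \<Rightarrow> 'v set \<Rightarrow> 'v set \<Rightarrow> bool" where
  "feasible E Q R B h B' R' \<longleftrightarrow> B' \<subseteq> B \<and> R' \<subseteq> R \<and>
     (\<forall>q\<in>Q. \<exists>b\<in>B'. reach E (Q \<union> R' \<union> B') q b h)"

definition cost :: "real \<Rightarrow> real \<Rightarrow> 'v set \<Rightarrow> 'v set \<Rightarrow> real" where
  "cost cs cr B' R' = cs * real (card B') + cr * real (card R')"

definition Qi :: "('v \<Rightarrow> 'v \<Rightarrow> bool) \<Rightarrow> 'v set \<Rightarrow> 'v set \<Rightarrow> 'v set \<Rightarrow> nat \<Rightarrow> 'v \<Rightarrow> 'v set" where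
  "Qi E Q R B h b = {q \<in> Q. reach E (Q \<union> R \<union> B) q b h}"

definition Ri :: "('v \<Rightarrow> 'v \<Rightarrow> bool) \<Rightarrow> 'v set \<Rightarrow> 'v set \<Rightarrow> 'v set \<Rightarrow> nat \<Rightarrow> 'v \<Rightarrow> 'v set" where
  "Ri E Q R B h b = {r \<in> R. reach E (Q \<union> R \<union> B) r b (h - 1)}"

text \<open>Specification of the relay-selection subroutine (e.g. SPTiRP): applied to the
  subgraph induced by Qj \<union> Rb \<union> {b}, it returns the relays on one chosen path of at
  most h edges from each source of Qj to b.\<close>
definition relay_sub_ok ::
  "('v \<Rightarrow> 'v \<Rightarrow> bool) \<Rightarrow> 'v set \<Rightarrow> 'v set \<Rightarrow> 'v \<Rightarrow> nat \<Rightarrow> 'v set \<Rightarrow> bool" where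
  "relay_sub_ok E Qj Rb b h Rhat \<longleftrightarrow>
     (\<exists>pf :: 'v \<Rightarrow> 'v list.
        (\<forall>q\<in>Qj. hpath E (Qj \<union> Rb \<union> {b}) q b h (pf q)) \<and>
        Rhat = (\<Union>q\<in>Qj. set (pf q) \<inter> Rb))"

text \<open>State: picked sinks P, covered sources C, selected relays S.
  Candidates are the not-yet-picked sinks b with nonempty Q_b^(j) (others have
  infinite cost-effectiveness).\<close>
definition greedy_step ::
  "('v \<Rightarrow> 'v \<Rightarrow> bool) \<Rightarrow> 'v set \<Rightarrow> 'v set \<Rightarrow> 'v set \<Rightarrow> nat \<Rightarrow> real \<Rightarrow> real \<Rightarrow>
   'v set \<Rightarrow> 'v set \<Rightarrow> 'v set \<Rightarrow> 'v set \<Rightarrow> 'v set \<Rightarrow> 'v set \<Rightarrow> bool" where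
  "greedy_step E Q R B h cs cr P C S P' C' S' \<longleftrightarrow>
    (let Qj = (\<lambda>b. Qi E Q R B h b - C);
         cand = {b \<in> B - P. Qj b \<noteq> {}}
     in \<exists>Rh :: 'v \<Rightarrow> 'v set.
          (\<forall>b\<in>cand. relay_sub_ok E (Qj b) (Ri E Q R B h b) b h (Rh b)) \<and>
          (let Cst = (\<lambda>b. (cs + cr * real (card (Rh b - S))) / real (card (Qj b)))
           in \<exists>b\<in>cand.
                (\<forall>b'\<in>cand. Cst b < Cst b' \<or> (Cst b = Cst b' \<and> card (Qj b') \<le> card (Qj b))) \<and>
                P' = P \<union> {b} \<and> C' = C \<union> Qj b \<and> S' = S \<union> Rh b))"

inductive greedy_out ::
  "('v \<Rightarrow> 'v \<Rightarrow> bool) \<Rightarrow> 'v set \<Rightarrow> 'v set \<Rightarrow> 'v set \<Rightarrow> nat \<Rightarrow> real \<Rightarrow> real \<Rightarrow>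
   'v set \<Rightarrow> 'v set \<Rightarrow> 'v set \<Rightarrow> 'v set \<times> 'v set \<Rightarrow> bool"
  for E Q R B h cs cr where
  stop: "Q \<subseteq> C \<Longrightarrow> greedy_out E Q R B h cs cr P C S (P, S)"
| step: "\<not> Q \<subseteq> C \<Longrightarrow> greedy_step E Q R B h cs cr P C S P' C' S' \<Longrightarrow>
         greedy_out E Q R B h cs cr P' C' S' out \<Longrightarrow> greedy_out E Q R B h cs cr P C S out"

text \<open>Possible outputs of SmartSelect (for any admissible subroutine outputs and
  any resolution of the remaining ties).\<close>
definition smart_select ::
  "('v \<Rightarrow> 'v \<Rightarrow> bool) \<Rightarrow> 'v set \<Rightarrow> 'v set \<Rightarrow> 'v set \<Rightarrow> nat \<Rightarrow> real \<Rightarrow> real \<Rightarrow>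
   'v set \<times> 'v set \<Rightarrow> bool" where
  "smart_select E Q R B h cs cr out \<longleftrightarrow>
    (if \<exists>b\<in>B. \<forall>q\<in>Q. reach E (Q \<union> B) q b h
     then \<exists>b\<in>B. (\<forall>q\<in>Q. reach E (Q \<union> B) q b h) \<and> out = ({b}, {})
     else (\<forall>q\<in>Q. \<exists>b\<in>B. reach E (Q \<union> R \<union> B) q b h) \<and>
          greedy_out E Q R B h cs cr {} {} {} out)"

end

theory Submission
  imports Defs
begin

text \<open>
  Let \<open>b\<^sub>s\<close> be the sink of a single-sink feasible solution. It reaches every source, so as
  long as it is not picked it is a greedy candidate covering all \<open>u\<close> uncovered sources with at
  most \<open>(h - 1) u\<close> relays. Hence a greedy pick covering \<open>t\<close> sources satisfies
  \<open>c\<^sub>s/t \<le> c\<^sub>s/u + c\<^sub>r(h - 1) \<le> c\<^sub>s/u + c\<^sub>s/(k(k+1))\<close> with \<open>k = \<lceil>\<alpha>m\<rceil>\<close>, which forces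
  \<open>t = u\<close>, \<open>t \<ge> k + 1\<close>, or \<open>t = k, u = k + 1\<close>. A potential argument then bounds the number of
  picked sinks by \<open>m/(k+1) + 1\<close>, while at most \<open>(h - 1) m \<le> c\<^sub>s m / (c\<^sub>r k(k+1))\<close> relays are
  selected. The total cost is at most \<open>c\<^sub>s (1 + m/k) \<le> c\<^sub>s (1 + 1/\<alpha>)\<close>, and every feasible
  solution costs at least \<open>c\<^sub>s\<close>.
\<close>

lemma hpath_mono: "hpath E S u v h p \<Longrightarrow> S \<subseteq> T \<Longrightarrow> hpath E T u v h p"
  unfolding hpath_def by auto

lemma card_hpath_interior:
  assumes "hpath E S u v h p" "u \<noteq> v"
  shows "card (set p - {u, v}) \<le> h - 1"
proof -
  have "u \<in> set p" "v \<in> set p" "card (set p) \<le> Suc h"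
    using assms(1) unfolding hpath_def by (auto simp: distinct_card)
  then show ?thesis using assms(2) by (subst card_Diff_subset) auto
qed

lemma relay_sub_ok_subset: "relay_sub_ok E Qj Rb b h Rh \<Longrightarrow> Rh \<subseteq> Rb"
  unfolding relay_sub_ok_def by auto

lemma card_relay_sub_ok:
  assumes "relay_sub_ok E Qj Rb b h Rh" "finite Qj" "Qj \<inter> Rb = {}" "b \<notin> Rb" "b \<notin> Qj"
  shows "card Rh \<le> (h - 1) * card Qj"
proof -
  obtain pf where paths: "\<forall>q\<in>Qj. hpath E (Qj \<union> Rb \<union> {b}) q b h (pf q)"
    and Rh: "Rh = (\<Union>q\<in>Qj. set (pf q) \<inter> Rb)"
    using assms(1) unfolding relay_sub_ok_def by blast
  have relays_on_path: "card (set (pf q) \<inter> Rb) \<le> h - 1" if "q \<in> Qj" for q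
  proof -
    have "card (set (pf q) \<inter> Rb) \<le> card (set (pf q) - {q, b})"
      using that assms(3,4) by (intro card_mono) auto
    also have "\<dots> \<le> h - 1"
      using card_hpath_interior [OF paths [rule_format, OF that]] that assms(5) by blast
    finally show ?thesis .
  qed
  have "card Rh \<le> (\<Sum>q\<in>Qj. card (set (pf q) \<inter> Rb))"
    unfolding Rh by (rule card_UN_le [OF assms(2)])
  also have "\<dots> \<le> (\<Sum>q\<in>Qj. h - 1)"
    using relays_on_path by (rule sum_mono)
  finally show ?thesis by (simp add: mult.commute)
qed

lemma Qi_subset: "Qi E Q R B h b \<subseteq> Q"
  unfolding Qi_def by auto

lemma Ri_subset: "Ri E Q R B h b \<subseteq> R"
  unfolding Ri_def by auto

lemma feasible_single_sink_Qi:
  assumes "feasible E Q R B h {b} R'"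
  shows "b \<in> B" "Qi E Q R B h b = Q"
proof -
  have "b \<in> B" "R' \<subseteq> R" using assms unfolding feasible_def by auto
  then show "b \<in> B" by blast
  have sub: "Q \<union> R' \<union> {b} \<subseteq> Q \<union> R \<union> B" using \<open>b \<in> B\<close> \<open>R' \<subseteq> R\<close> by blast
  have "reach E (Q \<union> R \<union> B) q b h" if "q \<in> Q" for q
  proof -
    have "reach E (Q \<union> R' \<union> {b}) q b h"
      using assms that unfolding feasible_def by simp
    then obtain p where "hpath E (Q \<union> R' \<union> {b}) q b h p"
      unfolding reach_def by blast
    then show ?thesis unfolding reach_def using hpath_mono [OF _ sub] by blast
  qed
  then show "Qi E Q R B h b = Q" unfolding Qi_def by auto
qed

lemma cost_ge_sink_cost:
  assumes "feasible E Q R B h B' R'" "finite B" "Q \<noteq> {}" "cs \<ge> 0" "cr \<ge> 0"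
  shows "cs \<le> cost cs cr B' R'"
proof -
  have "B' \<noteq> {}" "finite B'"
    using assms(1-3) unfolding feasible_def by (auto intro: finite_subset)
  then have "cs * 1 \<le> cs * real (card B')"
    using assms(4) by (intro mult_left_mono) (auto simp: Suc_leI card_gt_0_iff)
  then show ?thesis using assms(5) unfolding cost_def by (simp add: add_increasing2)
qed

lemma cost_effectiveness_bound:
  fixes cs cr x y c t u :: real
  assumes "(cs + cr * x) / t \<le> (cs + cr * y) / u"
    and "cr \<ge> 0" "t > 0" "u > 0" "x \<ge> 0" "y \<le> c * u"
  shows "cs / t \<le> cs / u + cr * c"
proof -
  have "cs / t \<le> (cs + cr * x) / t"
    using assms(2,3,5) by (simp add: divide_right_mono)
  also have "\<dots> \<le> (cs + cr * y) / u" by (fact assms(1))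
  also have "\<dots> \<le> (cs + cr * (c * u)) / u"
    using assms(2,4,6) by (simp add: divide_right_mono mult_left_mono)
  also have "\<dots> = cs / u + cr * c"
    using assms(4) by (simp add: field_simps)
  finally show ?thesis .
qed

lemma greedy_choice_cases:
  fixes k t u :: nat
  assumes "1 \<le> k" "1 \<le> t" "t \<le> u"
    and "1 / real t \<le> 1 / real u + 1 / (real k * (real k + 1))"
  shows "t = u \<or> k + 1 \<le> t \<or> (t = k \<and> u = k + 1)"
proof (rule ccontr)
  assume "\<not> ?thesis"
  then have "t < u" "t \<le> k" and not_last: "\<not> (t = k \<and> u = k + 1)" using assms(3) by auto
  define d where "d = u - t"
  have u: "u = t + d" and "d \<ge> 1" using \<open>t < u\<close> unfolding d_def by auto
  define K where "K = real k * (real k + 1)"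
  have pos: "K > 0" "real t > 0" "real u > 0" using assms(1-3) unfolding K_def by auto
  have "1 / real t * (real t * real u * K) \<le> (1 / real u + 1 / K) * (real t * real u * K)"
    using assms(4) pos unfolding K_def by (intro mult_right_mono) auto
  also have "\<dots> = real t * K + real t * real u"
    using pos by (simp add: distrib_right)
  finally have "real u * K \<le> real t * K + real t * real u"
    using pos by simp
  then have "real (d * (k * k) + d * k) \<le> real (t * t + t * d)"
    unfolding u K_def by (simp add: algebra_simps)
  then have main: "d * (k * k) + d * k \<le> t * t + t * d"
    by (simp only: of_nat_le_iff)
  have "t * t \<le> k * k" "t * d \<le> d * k" using \<open>t \<le> k\<close> by (simp_all add: mult_le_mono)
  then have "d * (k * k) \<le> 1 * (k * k)" using main by linarith
  then have "d = 1" using \<open>d \<ge> 1\<close> assms(1) mult_le_cancel2 [of d "k * k" 1] by simp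
  then have "k * k + k \<le> t * t + t" using main by simp
  moreover have "t + 1 \<le> k \<Longrightarrow> (t + 1) * (t + 1) \<le> k * k"
    using mult_le_mono [of "t + 1" k "t + 1" k] by blast
  ultimately have "t = k" using \<open>t \<le> k\<close> by (cases "t = k") (auto simp: algebra_simps)
  then show False using not_last u \<open>d = 1\<close> by simp
qed

text \<open>Potential for the number of sinks still to be picked when \<open>u\<close> sources are uncovered.
  Its value \<open>1\<close> at \<open>u = 1\<close> (rather than \<open>1/(k+1) + 1\<close>) is what absorbs a pick covering \<open>k\<close>
  of \<open>k + 1\<close> remaining sources.\<close>

definition greedy_sink_bound :: "nat \<Rightarrow> nat \<Rightarrow> real" where
  "greedy_sink_bound k u = (if u \<le> 1 then real u else real u / real (k + 1) + 1)"

lemma greedy_sink_bound_le: "greedy_sink_bound k u \<le> real u / real (k + 1) + 1"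
  unfolding greedy_sink_bound_def by (auto intro: add_increasing)

lemma greedy_sink_bound_step:
  assumes "1 \<le> k" "1 \<le> t" "t \<le> u"
    and "1 / real t \<le> 1 / real u + 1 / (real k * (real k + 1))"
  shows "1 + greedy_sink_bound k (u - t) \<le> greedy_sink_bound k u"
proof -
  consider "t = u" | "k + 1 \<le> t" | "t = k" "u = k + 1"
    using greedy_choice_cases [OF assms] by blast
  then show ?thesis
  proof cases
    case 1
    then show ?thesis using assms(2) by (simp add: greedy_sink_bound_def)
  next
    case 2
    have "1 + greedy_sink_bound k (u - t) \<le> 1 + (real u - real t) / real (k + 1) + 1"
      using greedy_sink_bound_le [of k "u - t"] assms(3) by (simp add: of_nat_diff)
    also have "\<dots> \<le> real u / real (k + 1) + 1"
      using 2 by (simp add: diff_divide_distrib)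
    also have "\<dots> = greedy_sink_bound k u"
      using 2 assms(1,3) by (simp add: greedy_sink_bound_def)
    finally show ?thesis .
  next
    case 3
    then have "u - t = 1" by simp
    moreover have "greedy_sink_bound k u = 2"
      using 3 assms(1) by (simp add: greedy_sink_bound_def)
    ultimately show ?thesis by (simp add: greedy_sink_bound_def)
  qed
qed

locale mssn_instance =
  fixes E :: "'v \<Rightarrow> 'v \<Rightarrow> bool" and Q R B :: "'v set" and h :: nat
  assumes finite_Q: "finite Q" and finite_R: "finite R"
    and disjoint_QR: "Q \<inter> R = {}" and disjoint_QB: "Q \<inter> B = {}" and disjoint_RB: "R \<inter> B = {}"
begin

lemma candidate_relays_bound:
  assumes "relay_sub_ok E (Qi E Q R B h b - C) (Ri E Q R B h b) b h Rh" "b \<in> B"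
  shows "card (Rh - S) \<le> (h - 1) * card (Qi E Q R B h b - C)"
proof -
  have Qi: "Qi E Q R B h b \<subseteq> Q" and Ri: "Ri E Q R B h b \<subseteq> R" by (fact Qi_subset Ri_subset)+
  have "finite Rh"
    using finite_subset [OF subset_trans [OF relay_sub_ok_subset [OF assms(1)] Ri] finite_R] .
  then have "card (Rh - S) \<le> card Rh" by (simp add: card_mono)
  also have "\<dots> \<le> (h - 1) * card (Qi E Q R B h b - C)"
  proof (rule card_relay_sub_ok [OF assms(1)])
    show "finite (Qi E Q R B h b - C)" using finite_subset [OF Qi finite_Q] by simp
    show "(Qi E Q R B h b - C) \<inter> Ri E Q R B h b = {}" using Qi Ri disjoint_QR by blast
    show "b \<notin> Ri E Q R B h b" using Ri assms(2) disjoint_RB by blast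
    show "b \<notin> Qi E Q R B h b - C" using Qi assms(2) disjoint_QB by blast
  qed
  finally show ?thesis .
qed

lemma greedy_step_progress:
  assumes step: "greedy_step E Q R B h cs cr P C S P' C' S'"
    and "h > 0" "cr \<ge> 0" "C \<subseteq> Q" "\<not> Q \<subseteq> C"
    and bs: "bs \<in> B - P" "Qi E Q R B h bs = Q"
  obtains T where "T \<subseteq> Q - C" "T \<noteq> {}" "C' = C \<union> T" "card P' \<le> card P + 1"
    "card S' \<le> card S + (h - 1) * card T" "bs \<in> P' \<Longrightarrow> T = Q - C"
    "cs / real (card T) \<le> cs / real (card (Q - C)) + cr * (real h - 1)"
proof -
  define Qj where "Qj = (\<lambda>b. Qi E Q R B h b - C)"
  define cand where "cand = {b \<in> B - P. Qj b \<noteq> {}}"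
  obtain Rh b where
    Rh: "\<forall>b\<in>cand. relay_sub_ok E (Qj b) (Ri E Q R B h b) b h (Rh b)" and
    "b \<in> cand" and
    best: "\<forall>b'\<in>cand.
      (cs + cr * real (card (Rh b - S))) / real (card (Qj b))
        < (cs + cr * real (card (Rh b' - S))) / real (card (Qj b')) \<or>
      ((cs + cr * real (card (Rh b - S))) / real (card (Qj b))
        = (cs + cr * real (card (Rh b' - S))) / real (card (Qj b')) \<and>
       card (Qj b') \<le> card (Qj b))" and
    upd: "P' = P \<union> {b}" "C' = C \<union> Qj b" "S' = S \<union> Rh b"
    using step unfolding greedy_step_def Let_def Qj_def cand_def by blast
  have finite_Qj: "finite (Qj b)" for b
    using finite_subset [OF Qi_subset finite_Q] by (simp add: Qj_def)
  have new_relays: "card (Rh b - S) \<le> (h - 1) * card (Qj b)" if "b \<in> cand" for b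
    using candidate_relays_bound [OF Rh [rule_format, OF that, unfolded Qj_def]] that
    by (simp add: Qj_def cand_def)
  have Qj_bs: "Qj bs = Q - C" by (simp add: Qj_def bs(2))
  have "bs \<in> cand" using bs(1) Qj_bs \<open>\<not> Q \<subseteq> C\<close> by (auto simp: cand_def)
  have "Qj b \<noteq> {}" using \<open>b \<in> cand\<close> by (simp add: cand_def)
  have "real (card (Rh bs - S)) \<le> real ((h - 1) * card (Qj bs))"
    using new_relays [OF \<open>bs \<in> cand\<close>] by (simp only: of_nat_le_iff)
  then have relays_bs: "real (card (Rh bs - S)) \<le> (real h - 1) * real (card (Qj bs))"
    using \<open>h > 0\<close> by (simp add: of_nat_diff)
  have "cs / real (card (Qj b)) \<le> cs / real (card (Q - C)) + cr * (real h - 1)"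
  proof (rule cost_effectiveness_bound [OF _ \<open>cr \<ge> 0\<close> _ _ _ relays_bs, unfolded Qj_bs])
    show "(cs + cr * real (card (Rh b - S))) / real (card (Qj b))
        \<le> (cs + cr * real (card (Rh bs - S))) / real (card (Q - C))"
      using best \<open>bs \<in> cand\<close> Qj_bs by fastforce
    show "real (card (Qj b)) > 0" "real (card (Q - C)) > 0"
      using \<open>Qj b \<noteq> {}\<close> \<open>\<not> Q \<subseteq> C\<close> finite_Qj finite_Q by (auto simp: card_gt_0_iff)
  qed simp
  moreover have "card P' \<le> card P + 1"
    unfolding upd using card_Un_le [of P "{b}"] by simp
  moreover have "card S' \<le> card S + (h - 1) * card (Qj b)"
    unfolding upd using card_Un_le [of S "Rh b - S"] new_relays [OF \<open>b \<in> cand\<close>] by simp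
  moreover have "bs \<in> P' \<Longrightarrow> Qj b = Q - C" using upd bs(1) Qj_bs by auto
  moreover have "Qj b \<subseteq> Q - C" using Qi_subset [of E Q R B h b] by (auto simp: Qj_def)
  ultimately show thesis
    using that \<open>Qj b \<noteq> {}\<close> upd(2) by blast
qed

lemma greedy_out_card_bound:
  assumes "greedy_out E Q R B h cs cr P C S out"
    and "h > 0" "cs > 0" "cr \<ge> 0" "k \<ge> 1"
    and relay_cost: "cr * (real h - 1) \<le> cs / (real k * (real k + 1))"
    and bs: "bs \<in> B" "Qi E Q R B h bs = Q"
    and "C \<subseteq> Q" "bs \<in> P \<longrightarrow> Q \<subseteq> C"
  shows "real (card (fst out)) \<le> real (card P) + greedy_sink_bound k (card (Q - C)) \<and>
    card (snd out) \<le> card S + (h - 1) * card (Q - C)"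
  using assms(1,9,10)
proof (induction rule: greedy_out.induct)
  case (stop C P S)
  then show ?case by (simp add: greedy_sink_bound_def)
next
  case (step C P S P' C' S' out)
  have "bs \<in> B - P" using bs(1) step.hyps(1) step.prems(2) by blast
  then obtain T where T: "T \<subseteq> Q - C" "T \<noteq> {}" and C': "C' = C \<union> T"
    and P': "card P' \<le> card P + 1" and S': "card S' \<le> card S + (h - 1) * card T"
    and bs_P': "bs \<in> P' \<Longrightarrow> T = Q - C"
    and effectiveness: "cs / real (card T) \<le> cs / real (card (Q - C)) + cr * (real h - 1)"
    using greedy_step_progress [OF step.hyps(2) \<open>h > 0\<close> \<open>cr \<ge> 0\<close> step.prems(1) step.hyps(1) _ bs(2)]
    by metis
  define u where "u = card (Q - C)"
  define t where "t = card T"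
  have finite_T: "finite T" using T(1) finite_Q by (auto intro: finite_subset)
  have "1 \<le> t" using T(2) finite_T by (simp add: t_def Suc_leI card_gt_0_iff)
  have "t \<le> u" using T(1) finite_Q by (simp add: t_def u_def card_mono)
  have "Q - C' = (Q - C) - T" by (auto simp: C')
  then have uncovered': "card (Q - C') = u - t"
    using T(1) finite_T by (simp add: t_def u_def card_Diff_subset)
  have "cs * (1 / real t) \<le> cs * (1 / real u + 1 / (real k * (real k + 1)))"
    using effectiveness relay_cost by (simp add: t_def u_def distrib_left)
  then have "1 / real t \<le> 1 / real u + 1 / (real k * (real k + 1))"
    by (subst (asm) mult_le_cancel_left_pos [OF \<open>cs > 0\<close>])
  then have sink_step: "1 + greedy_sink_bound k (u - t) \<le> greedy_sink_bound k u"
    using greedy_sink_bound_step \<open>k \<ge> 1\<close> \<open>1 \<le> t\<close> \<open>t \<le> u\<close> by blast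
  have "C' \<subseteq> Q" "bs \<in> P' \<longrightarrow> Q \<subseteq> C'" using step.prems(1) T(1) bs_P' C' by auto
  then have IH: "real (card (fst out)) \<le> real (card P') + greedy_sink_bound k (u - t)"
      "card (snd out) \<le> card S' + (h - 1) * (u - t)"
    using step.IH uncovered' by auto
  have "real (card (fst out)) \<le> real (card P) + greedy_sink_bound k u"
    using IH(1) P' sink_step by linarith
  moreover have "(h - 1) * t + (h - 1) * (u - t) = (h - 1) * u"
    using \<open>t \<le> u\<close> by (metis add_mult_distrib2 le_add_diff_inverse)
  then have "card (snd out) \<le> card S + (h - 1) * u"
    using IH(2) S' unfolding t_def by linarith
  ultimately show ?case unfolding u_def ..
qed

lemma smart_select_cost_le:
  assumes "smart_select E Q R B h cs cr (Bout, Rout)"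
    and "h > 0" "cs > 0" "cr \<ge> 0" "k \<ge> 1"
    and relay_cost: "cr * (real h - 1) \<le> cs / (real k * (real k + 1))"
    and bs: "bs \<in> B" "Qi E Q R B h bs = Q"
  shows "cost cs cr Bout Rout \<le> cs * (1 + real (card Q) / real k)"
proof (cases "\<exists>b\<in>B. \<forall>q\<in>Q. reach E (Q \<union> B) q b h")
  case True
  then obtain b where "Bout = {b}" "Rout = {}"
    using assms(1) unfolding smart_select_def by auto
  then show ?thesis using \<open>cs > 0\<close> by (simp add: cost_def)
next
  case False
  define m where "m = card Q"
  have "greedy_out E Q R B h cs cr {} {} {} (Bout, Rout)"
    using assms(1) False unfolding smart_select_def by auto
  from greedy_out_card_bound [OF this assms(2-5) relay_cost bs]
  have sinks: "real (card Bout) \<le> greedy_sink_bound k m"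
    and relays: "card Rout \<le> (h - 1) * m"
    by (simp_all add: m_def)
  have "real (card Rout) \<le> real ((h - 1) * m)" using relays by (simp only: of_nat_le_iff)
  then have "real (card Rout) \<le> (real h - 1) * real m" using \<open>h > 0\<close> by (simp add: of_nat_diff)
  then have "cost cs cr Bout Rout \<le> cs * (real m / real (k + 1) + 1) + cr * ((real h - 1) * real m)"
    unfolding cost_def using sinks greedy_sink_bound_le [of k m] \<open>cs > 0\<close> \<open>cr \<ge> 0\<close>
    by (intro add_mono mult_left_mono) auto
  also have "\<dots> \<le> cs * (real m / real (k + 1) + 1) + cs / (real k * (real k + 1)) * real m"
    using mult_right_mono [OF relay_cost, of "real m"] by (simp add: mult.assoc)
  also have "\<dots> = cs * (1 + real m / real k)"
  proof -
    have k: "real k > 0" using \<open>k \<ge> 1\<close> by simp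
    then have "real m / (real k + 1) = real m * real k / (real k * (real k + 1))" by simp
    also have "\<dots> + real m / (real k * (real k + 1)) = real m * (real k + 1) / (real k * (real k + 1))"
      by (simp add: add_divide_distrib [symmetric] algebra_simps)
    also have "\<dots> = real m / real k" using k by simp
    finally have "real m / real k = real m / (real k + 1) + real m / (real k * (real k + 1))" ..
    then show ?thesis by (simp add: algebra_simps)
  qed
  finally show ?thesis unfolding m_def .
qed

end

theorem corollary1:
  fixes E :: "'v \<Rightarrow> 'v \<Rightarrow> bool" and Q R B :: "'v set" and h :: nat
    and cs cr \<alpha> :: real and Bout Rout :: "'v set"
  assumes "finite Q" "finite R" "finite B"
    and "Q \<inter> R = {}" "Q \<inter> B = {}" "R \<inter> B = {}"
    and "\<And>x y. E x y \<Longrightarrow> E y x"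
    and "h > 0" and "cs > 0" and "cr > 0"
    and "Q \<noteq> {}"
    and "\<exists>b R'. feasible E Q R B h {b} R'"
    and "0 < \<alpha>" "\<alpha> \<le> 1"
    and "cs / cr \<ge> of_int \<lceil>\<alpha> * real (card Q)\<rceil> * (of_int \<lceil>\<alpha> * real (card Q)\<rceil> + 1) * (real h - 1)"
    and "smart_select E Q R B h cs cr (Bout, Rout)"
  shows "\<forall>B' R'. feasible E Q R B h B' R' \<longrightarrow>
           cost cs cr Bout Rout \<le> (1 + 1 / \<alpha>) * cost cs cr B' R'"
proof (intro allI impI)
  fix B' R' assume feasible: "feasible E Q R B h B' R'"
  interpret mssn_instance E Q R B h using assms(1-6) by unfold_locales
  define k where "k = nat \<lceil>\<alpha> * real (card Q)\<rceil>"
  have "\<alpha> * real (card Q) > 0" using assms(1,11,13) by (simp add: card_gt_0_iff)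
  then have k: "real k = of_int \<lceil>\<alpha> * real (card Q)\<rceil>" "\<alpha> * real (card Q) \<le> real k" "k \<ge> 1"
    unfolding k_def by linarith+
  have "cr * (real h - 1) * (real k * (real k + 1)) \<le> cs"
    using assms(10,15) k(1) by (simp add: field_simps)
  moreover have "real k * (real k + 1) > 0" using k(3) by simp
  ultimately have relay_cost: "cr * (real h - 1) \<le> cs / (real k * (real k + 1))"
    by (simp add: pos_le_divide_eq)
  obtain bs R\<^sub>s where "feasible E Q R B h {bs} R\<^sub>s" using assms(12) by blast
  note bs = feasible_single_sink_Qi [OF this]
  have "cost cs cr Bout Rout \<le> cs * (1 + real (card Q) / real k)"
    using smart_select_cost_le assms(8-10,16) k(3) relay_cost bs by (simp add: less_imp_le)
  also have "\<dots> \<le> cs * (1 + 1 / \<alpha>)"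
    using k(2,3) assms(9,13) by (simp add: field_simps)
  also have "\<dots> \<le> (1 + 1 / \<alpha>) * cost cs cr B' R'"
  proof -
    have "cs \<le> cost cs cr B' R'"
      using cost_ge_sink_cost [OF feasible assms(3,11)] assms(9,10) by simp
    moreover have "0 \<le> 1 + 1 / \<alpha>" using assms(13) by simp
    ultimately show ?thesis by (metis mult.commute mult_right_mono)
  qed
  finally show "cost cs cr Bout Rout \<le> (1 + 1 / \<alpha>) * cost cs cr B' R'" .
qed

end
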